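(* For $n\ge6$ let $H_n$ be the graph on nodes $\{1,\dots,n\}$ whose edges are all ten pairs in $\{1,2,3,4,5\}$ together with the path edges $\{5,6\},\{6,7\},\dots,\{n-1,n\}$. Then $C(3)=\frac{30}{n+28}$ for $n\ge6$, $C(4)=\frac{80}{n+95}$ for $n\ge7$, and $C(5)=\frac{125}{n+203}$ for $n\ge8$. Consequently, for $n\ge8$, $C(4)\ge C(5)$ if and only if $n\le97$, with equality if and only if $n=97$, where $C(4)=C(5)=\tfrac{5}{12}$; and for $n\ge7$, $C(3)\ge C(4)$ if and only if $n\le12$.
   Context: For $b\ge3$, a $b$-clique is a set of $b$ pairwise adjacent nodes; a $b$-spanning tree in $G$ is a (not necessarily induced) subgraph of $G$ that is a tree on exactly $b$ nodes; and $C(b)=b^{b-2}\times(\#b\text{-cliques in }G)/(\#b\text{-spanning trees in }G)$. *)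

theory Defs
  imports Complex_Main
begin

definition simple_graph :: "'a set \<Rightarrow> 'a set set \<Rightarrow> bool" where
  "simple_graph V E \<longleftrightarrow> finite V \<and> (\<forall>e\<in>E. card e = 2 \<and> e \<subseteq> V)"

definition cliques :: "'a set \<Rightarrow> 'a set set \<Rightarrow> nat \<Rightarrow> 'a set set" where
  "cliques V E b = {S. S \<subseteq> V \<and> card S = b \<and> (\<forall>x\<in>S. \<forall>y\<in>S. x \<noteq> y \<longrightarrow> {x, y} \<in> E)}"

definition connected_on :: "'a set \<Rightarrow> 'a set set \<Rightarrow> bool" where
  "connected_on S F \<longleftrightarrow> (\<forall>x\<in>S. \<forall>y\<in>S. (\<lambda>u v. {u, v} \<in> F)\<^sup>*\<^sup>* x y)"

definition has_cycle :: "'a set \<Rightarrow> 'a set set \<Rightarrow> bool" where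
  "has_cycle S F \<longleftrightarrow> (\<exists>vs. length vs \<ge> 3 \<and> distinct vs \<and> set vs \<subseteq> S \<and>
      (\<forall>i. Suc i < length vs \<longrightarrow> {vs ! i, vs ! Suc i} \<in> F) \<and> {last vs, hd vs} \<in> F)"

definition is_tree :: "'a set \<Rightarrow> 'a set set \<Rightarrow> bool" where
  "is_tree S F \<longleftrightarrow> S \<noteq> {} \<and> connected_on S F \<and> \<not> has_cycle S F"

definition span_trees :: "'a set \<Rightarrow> 'a set set \<Rightarrow> nat \<Rightarrow> ('a set \<times> 'a set set) set" where
  "span_trees V E b = {(S, F). S \<subseteq> V \<and> F \<subseteq> E \<and> (\<forall>e\<in>F. e \<subseteq> S) \<and> card S = b \<and> is_tree S F}"

definition C_ratio :: "'a set \<Rightarrow> 'a set set \<Rightarrow> nat \<Rightarrow> real" where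
  "C_ratio V E b = real (b ^ (b - 2)) * real (card (cliques V E b)) / real (card (span_trees V E b))"

definition H_V :: "nat \<Rightarrow> nat set" where
  "H_V n = {1..n}"

definition H_E :: "nat \<Rightarrow> nat set set" where
  "H_E n = {{i, j} | i j. i \<in> {1..5} \<and> j \<in> {1..5} \<and> i \<noteq> j}
         \<union> {{i, Suc i} | i. 5 \<le> i \<and> Suc i \<le> n}"

end

theory Submission
  imports Defs
begin

text \<open>A vertex \<open>x \<ge> 6\<close> of \<open>H\<^sub>n\<close> has only the neighbours \<open>x - 1\<close> and \<open>x + 1\<close>, which are not
  adjacent, so for \<open>b \<ge> 3\<close> every \<open>b\<close>-clique lies in \<open>K\<^sub>5\<close> and there are \<open>5 choose b\<close> of them.
  Every edge \<open>{k - 1, k}\<close> with \<open>k \<ge> 6\<close> is a bridge. Hence, once \<open>n \<ge> b + 3\<close>, a tree on \<open>b\<close>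
  vertices of \<open>H\<^sub>n\<^sub>+\<^sub>1\<close> through the new vertex \<open>n + 1\<close> must be the path \<open>n + 2 - b, \<dots>, n + 1\<close>,
  and all other such trees are trees of \<open>H\<^sub>n\<close>: the number of \<open>b\<close>-spanning trees grows by one
  with each vertex. At \<open>n = b + 3\<close> it is 34, 102 and 211 for \<open>b = 3, 4, 5\<close>, computed by
  enumerating the \<open>(b - 1)\<close>-element edge sets and keeping those that connect exactly \<open>b\<close>
  vertices, which are precisely the trees.\<close>

section \<open>Trees: leaves and edge count\<close>

abbreviation adj :: "'a set set \<Rightarrow> 'a \<Rightarrow> 'a \<Rightarrow> bool" where
  "adj F \<equiv> (\<lambda>u v. {u, v} \<in> F)"

lemma adj_rtranclp_sym: "(adj F)\<^sup>*\<^sup>* x y \<Longrightarrow> (adj F)\<^sup>*\<^sup>* y x"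
proof (induction rule: rtranclp.induct)
  case (rtrancl_into_rtrancl a b c)
  have "adj F c b" using rtrancl_into_rtrancl.hyps(2) by (simp add: insert_commute)
  then show ?case using rtrancl_into_rtrancl.IH by (rule converse_rtranclp_into_rtranclp)
qed simp

lemma connected_on_incident_edge:
  assumes "finite S" "connected_on S F" "2 \<le> card S" "x \<in> S"
  obtains w where "{x, w} \<in> F"
proof -
  obtain y where y: "y \<in> S" "y \<noteq> x"
    using assms(1,3,4) by (metis card_le_Suc0_iff_eq not_less_eq_eq numeral_2_eq_2)
  have "(adj F)\<^sup>*\<^sup>* x y" using assms(2,4) y(1) unfolding connected_on_def by blast
  then show thesis using y(2) that by (cases rule: converse_rtranclpE) auto
qed

lemma has_cycle_mono: "has_cycle S' F' \<Longrightarrow> S' \<subseteq> S \<Longrightarrow> F' \<subseteq> F \<Longrightarrow> has_cycle S F"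
  unfolding has_cycle_def by blast

lemma cycle_vertex_two_neighbours:
  assumes L: "length vs \<ge> 3" and d: "distinct vs"
    and c: "\<forall>i. Suc i < length vs \<longrightarrow> {vs ! i, vs ! Suc i} \<in> F"
    and cl: "{last vs, hd vs} \<in> F" and j: "j < length vs"
  obtains a b where "a \<noteq> b" "a \<in> set vs" "b \<in> set vs" "{vs ! j, a} \<in> F" "{vs ! j, b} \<in> F"
proof -
  define n where "n = length vs"
  have hd: "hd vs = vs ! 0" and lst: "last vs = vs ! (n - 1)"
    using L by (auto simp: hd_conv_nth last_conv_nth n_def simp flip: length_greater_0_conv)
  have inj: "\<And>p q. p < n \<Longrightarrow> q < n \<Longrightarrow> p \<noteq> q \<Longrightarrow> vs ! p \<noteq> vs ! q"
    using d by (simp add: n_def nth_eq_iff_index_eq)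
  define p where "p = (if j = 0 then n - 1 else j - 1)"
  define q where "q = (if j = n - 1 then 0 else j + 1)"
  have pq: "p < n" "q < n" "p \<noteq> q" using j L by (auto simp: p_def q_def n_def)
  have "{vs ! j, vs ! p} \<in> F"
  proof (cases "j = 0")
    case True then show ?thesis using cl hd lst by (simp add: p_def insert_commute)
  next
    case False then show ?thesis using c[rule_format, of "j - 1"] j by (simp add: p_def insert_commute)
  qed
  moreover have "{vs ! j, vs ! q} \<in> F"
  proof (cases "j = n - 1")
    case True then show ?thesis using cl hd lst by (simp add: q_def)
  next
    case False then show ?thesis using c[rule_format, of j] j by (simp add: q_def n_def)
  qed
  ultimately show thesis using that inj[OF pq] pq n_def by simp
qed

text \<open>A longest path through a nonempty acyclic edge set ends in a leaf: any further
  neighbour of its end would either extend it or close a cycle.\<close>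
lemma acyclic_leaf:
  assumes fin: "finite S" and E: "\<forall>e\<in>F. card e = 2 \<and> e \<subseteq> S" and ne: "F \<noteq> {}"
    and ac: "\<not> has_cycle S F"
  obtains u v where "{u, v} \<in> F" "\<forall>w. {w, v} \<in> F \<longrightarrow> w = u"
proof -
  define P where "P = {vs. set vs \<subseteq> S \<and> distinct vs \<and> length vs \<ge> 2 \<and>
     (\<forall>i. Suc i < length vs \<longrightarrow> {vs ! i, vs ! Suc i} \<in> F)}"
  have finP: "finite P"
    by (rule finite_subset[OF _ finite_subset_distinct[OF fin]]) (auto simp: P_def)
  obtain a b where ab: "{a, b} \<in> F" "a \<noteq> b"
    using ne E by (metis card_2_iff ex_in_conv)
  then have "[a, b] \<in> P" using E by (auto simp: P_def less_Suc_eq)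
  then have "Max (length ` P) \<in> length ` P" using finP by (intro Max_in) auto
  then obtain vs where vs: "vs \<in> P" "length vs = Max (length ` P)" by auto
  have mx: "\<And>ws. ws \<in> P \<Longrightarrow> length ws \<le> length vs" using finP vs(2) by simp
  have L2: "length vs \<ge> 2" and dv: "distinct vs" and sv: "set vs \<subseteq> S"
    and cv: "\<forall>i. Suc i < length vs \<longrightarrow> {vs ! i, vs ! Suc i} \<in> F" using vs(1) by (auto simp: P_def)
  define v where "v = vs ! 0"
  define u where "u = vs ! 1"
  have "\<forall>w. {w, v} \<in> F \<longrightarrow> w = u"
  proof (intro allI impI, rule ccontr)
    fix w assume wv: "{w, v} \<in> F" and wu: "w \<noteq> u"
    have "w \<noteq> v" "w \<in> S" using E wv by fastforce+
    show False
    proof (cases "w \<in> set vs")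
      case False
      have "w # vs \<in> P" unfolding P_def
      proof (intro CollectI conjI allI impI)
        fix i assume "Suc i < length (w # vs)"
        then show "{(w # vs) ! i, (w # vs) ! Suc i} \<in> F"
          using cv wv by (cases i) (auto simp: v_def)
      qed (use False dv sv \<open>w \<in> S\<close> L2 in auto)
      then show False using mx by fastforce
    next
      case True
      then obtain j where j: "j < length vs" "vs ! j = w" by (auto simp: in_set_conv_nth)
      with \<open>w \<noteq> v\<close> wu have j2: "j \<ge> 2" unfolding u_def v_def
        by (metis One_nat_def less_2_cases not_le)
      have "has_cycle S F" unfolding has_cycle_def
      proof (intro exI[of _ "take (Suc j) vs"] conjI allI impI)
        show "{last (take (Suc j) vs), hd (take (Suc j) vs)} \<in> F"
          using j j2 wv by (auto simp: take_Suc_conv_app_nth hd_conv_nth nth_append v_def)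
      qed (use j j2 dv sv cv set_take_subset[of "Suc j" vs] in auto)
      then show False using ac by simp
    qed
  qed
  moreover have "{u, v} \<in> F" using cv L2 by (auto simp: u_def v_def insert_commute)
  ultimately show thesis using that by blast
qed

lemma remove_leaf_edges:
  assumes "\<forall>e\<in>F. card e = 2 \<and> e \<subseteq> S" and leaf: "\<forall>w. {w, v} \<in> F \<longrightarrow> w = u"
  shows "\<forall>e\<in>F - {{u, v}}. card e = 2 \<and> e \<subseteq> S - {v}"
proof
  fix e assume e: "e \<in> F - {{u, v}}"
  then obtain a b where ab: "e = {a, b}" "card e = 2" "e \<subseteq> S"
    using assms(1) by (metis DiffD1 card_2_iff)
  have "v \<notin> e"
  proof
    assume "v \<in> e"
    then have "e = {a, v} \<or> e = {b, v}" using ab by auto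
    then show False using leaf e ab by (auto simp: insert_commute)
  qed
  then show "card e = 2 \<and> e \<subseteq> S - {v}" using ab by auto
qed

lemma connected_on_remove_leaf:
  assumes conn: "connected_on S F" and leaf: "\<forall>w. {w, v} \<in> F \<longrightarrow> w = u"
  shows "connected_on (S - {v}) (F - {{u, v}})"
proof -
  let ?F = "F - {{u, v}}"
  \<comment> \<open>a walk from x \<noteq> v to z avoids the leaf edge, except for a final step into v\<close>
  have walk: "(adj F)\<^sup>*\<^sup>* x z \<Longrightarrow> x \<noteq> v \<Longrightarrow> (adj ?F)\<^sup>*\<^sup>* x (if z = v then u else z)" for x z
  proof (induction rule: rtranclp.induct)
    case (rtrancl_into_rtrancl a b c)
    have bc: "{b, c} \<in> F" by fact
    consider "b = v" "c = v" | "b = v" "c \<noteq> v" | "b \<noteq> v" "c = v" | "b \<noteq> v" "c \<noteq> v" by blast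
    then show ?case
    proof cases
      case 2 with bc leaf have "c = u" by (simp add: insert_commute)
      then show ?thesis using rtrancl_into_rtrancl 2 by simp
    next
      case 3 with bc leaf have "b = u" by blast
      then show ?thesis using rtrancl_into_rtrancl 3 by simp
    next
      case 4
      then have "adj ?F b c" using bc by (auto simp: doubleton_eq_iff)
      then show ?thesis using rtrancl_into_rtrancl 4 by (simp add: rtranclp.rtrancl_into_rtrancl)
    qed (use rtrancl_into_rtrancl in simp)
  qed simp
  show ?thesis unfolding connected_on_def
  proof (intro ballI)
    fix x y assume "x \<in> S - {v}" "y \<in> S - {v}"
    then show "(adj ?F)\<^sup>*\<^sup>* x y" using walk[of x y] conn unfolding connected_on_def by auto
  qed
qed

lemma has_cycle_remove_leaf:
  assumes leaf: "\<forall>w. {w, v} \<in> F \<longrightarrow> w = u"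
  shows "has_cycle (S - {v}) (F - {{u, v}}) \<longleftrightarrow> has_cycle S F"
proof
  assume "has_cycle S F"
  then obtain vs where L: "length vs \<ge> 3" and d: "distinct vs" and s: "set vs \<subseteq> S"
    and c: "\<forall>i. Suc i < length vs \<longrightarrow> {vs ! i, vs ! Suc i} \<in> F"
    and cl: "{last vs, hd vs} \<in> F" unfolding has_cycle_def by blast
  have nv: "v \<notin> set vs"
  proof
    assume "v \<in> set vs"
    then obtain j where j: "j < length vs" "vs ! j = v" by (auto simp: in_set_conv_nth)
    obtain a b where "a \<noteq> b" "{v, a} \<in> F" "{v, b} \<in> F"
      using cycle_vertex_two_neighbours[OF L d c cl j(1)] j(2) by metis
    then show False using leaf by (metis insert_commute)
  qed
  have "vs \<noteq> []" using L by auto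
  then have "\<forall>i. Suc i < length vs \<longrightarrow> {vs ! i, vs ! Suc i} \<in> F - {{u, v}}"
    and "{last vs, hd vs} \<in> F - {{u, v}}"
    using c cl nv by (auto simp: doubleton_eq_iff)
  then show "has_cycle (S - {v}) (F - {{u, v}})"
    unfolding has_cycle_def using L d s nv by blast
qed (auto intro: has_cycle_mono)

lemma sum_degree_eq_sum_card:
  assumes "finite S" "finite F" "\<forall>e\<in>F. e \<subseteq> S"
  shows "(\<Sum>x\<in>S. card {e\<in>F. x \<in> e}) = (\<Sum>e\<in>F. card e)"
proof -
  have "(\<lambda>(x, e). (e, x)) ` (SIGMA x:S. {e\<in>F. x \<in> e}) = (SIGMA e:F. e)"
    using assms(3) by (force simp: image_iff)
  then have "card (SIGMA x:S. {e\<in>F. x \<in> e}) = card (SIGMA e:F. e)"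
    using card_image[OF swap_inj_on, of "SIGMA x:S. {e\<in>F. x \<in> e}"] by simp
  moreover have "\<forall>e\<in>F. finite e" using assms by (meson finite_subset)
  ultimately show ?thesis using assms by (simp add: card_SigmaI)
qed

text \<open>If there are fewer edges than vertices, some vertex has degree below 2 (the degrees
  sum to twice the number of edges), and in a connected graph this vertex is a leaf.\<close>
lemma few_edges_leaf:
  assumes fin: "finite S" and E: "\<forall>e\<in>F. card e = 2 \<and> e \<subseteq> S" and conn: "connected_on S F"
    and S2: "2 \<le> card S" and less: "card F < card S"
  obtains u v where "{u, v} \<in> F" "\<forall>w. {w, v} \<in> F \<longrightarrow> w = u"
proof -
  have finF: "finite F" by (rule finite_subset[of F "Pow S"]) (use E fin in auto)
  have "(\<Sum>x\<in>S. card {e\<in>F. x \<in> e}) = 2 * card F"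
    using sum_degree_eq_sum_card[OF fin finF] E by simp
  then have "\<not> (\<forall>x\<in>S. 2 \<le> card {e\<in>F. x \<in> e})"
    using sum_mono[of S "\<lambda>_. 2::nat" "\<lambda>x. card {e\<in>F. x \<in> e}"] less by auto
  then obtain v where v: "v \<in> S" "card {e\<in>F. v \<in> e} \<le> 1" by force
  obtain u where vu: "{v, u} \<in> F" using connected_on_incident_edge[OF fin conn S2 v(1)] .
  have "w = u" if "{w, v} \<in> F" for w
  proof -
    have "{w, v} \<in> {e\<in>F. v \<in> e}" "{v, u} \<in> {e\<in>F. v \<in> e}" using that vu by auto
    then have "{w, v} = {v, u}"
      using v(2) finF card_le_Suc0_iff_eq[of "{e\<in>F. v \<in> e}"] by auto
    then show "w = u" by (auto simp: doubleton_eq_iff)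
  qed
  then show thesis using that vu by (metis insert_commute)
qed

lemma acyclic_iff_card_edges:
  assumes "finite S" "\<forall>e\<in>F. card e = 2 \<and> e \<subseteq> S" "connected_on S F" "S \<noteq> {}"
  shows "\<not> has_cycle S F \<longleftrightarrow> card F + 1 = card S"
  using assms
proof (induction "card S" arbitrary: S F rule: less_induct)
  case less
  note fin = less.prems(1) and E = less.prems(2) and conn = less.prems(3)
  have finF: "finite F" by (rule finite_subset[of F "Pow S"]) (use E fin in auto)
  show ?case
  proof (cases "card S = 1")
    case True
    then obtain x where "S = {x}" by (auto simp: card_1_singleton_iff)
    then have "card e \<le> 1" if "e \<in> F" for e
      using E that card_mono[of "{x}" e] by auto
    then have "F = {}" using E by fastforce
    then show ?thesis using True unfolding has_cycle_def by auto
  next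
    case False
    moreover have "0 < card S" using less.prems(1,4) by (simp add: card_gt_0_iff)
    ultimately have S2: "2 \<le> card S" by linarith
    then obtain x w where "{x, w} \<in> F"
      using connected_on_incident_edge[OF fin conn] less.prems(4) by (metis ex_in_conv)
    then have "F \<noteq> {}" by auto
    show ?thesis
    proof (cases "\<not> has_cycle S F \<or> card F + 1 = card S")
      case True
      obtain u v where leaf: "{u, v} \<in> F" "\<forall>w. {w, v} \<in> F \<longrightarrow> w = u"
      proof (cases "has_cycle S F")
        case False
        then show thesis using acyclic_leaf[OF fin E \<open>F \<noteq> {}\<close>] that by blast
      next
        case True
        then have "card F < card S" using \<open>\<not> has_cycle S F \<or> card F + 1 = card S\<close> by simp
        then show thesis using few_edges_leaf[OF fin E conn S2] that by blast
      qed
      have "card {u, v} = 2" "{u, v} \<subseteq> S" using leaf(1) E by auto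
      then have uv: "u \<in> S - {v}" "v \<in> S" by (auto simp: card_insert_if split: if_splits)
      have "\<not> has_cycle (S - {v}) (F - {{u, v}}) \<longleftrightarrow> card (F - {{u, v}}) + 1 = card (S - {v})"
        using less.hyps[OF card_Diff1_less[OF fin uv(2)]] fin remove_leaf_edges[OF E leaf(2)]
          connected_on_remove_leaf[OF conn leaf(2)] uv(1) by blast
      moreover have "card F > 0" using leaf(1) finF card_gt_0_iff by blast
      moreover have "card (F - {{u, v}}) = card F - 1" "card (S - {v}) = card S - 1"
        using leaf(1) finF uv(2) by simp_all
      ultimately show ?thesis using has_cycle_remove_leaf[OF leaf(2)] S2 by auto
    qed simp
  qed
qed

lemma tree_card_edges:
  "finite S \<Longrightarrow> \<forall>e\<in>F. card e = 2 \<and> e \<subseteq> S \<Longrightarrow> is_tree S F \<Longrightarrow> card F + 1 = card S"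
  using acyclic_iff_card_edges unfolding is_tree_def by blast

lemma span_trees_iff:
  assumes b2: "2 \<le> b" and EV: "\<forall>e\<in>E. card e = 2 \<and> e \<subseteq> V"
  shows "(S, F) \<in> span_trees V E b \<longleftrightarrow>
    S = \<Union>F \<and> F \<subseteq> E \<and> card F = b - 1 \<and> card (\<Union>F) = b \<and> connected_on (\<Union>F) F"
proof
  assume "(S, F) \<in> span_trees V E b"
  then have FE: "F \<subseteq> E" and FS: "\<forall>e\<in>F. e \<subseteq> S" and cS: "card S = b" and tr: "is_tree S F"
    unfolding span_trees_def by auto
  have fin: "finite S" using cS b2 card.infinite by fastforce
  have E2: "\<forall>e\<in>F. card e = 2 \<and> e \<subseteq> S" using FE FS EV by blast
  have conn: "connected_on S F" using tr unfolding is_tree_def by blast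
  have "S \<subseteq> \<Union>F"
  proof
    fix x assume "x \<in> S"
    then obtain w where "{x, w} \<in> F" using connected_on_incident_edge[OF fin conn] cS b2 by metis
    then show "x \<in> \<Union>F" by blast
  qed
  then have "S = \<Union>F" using FS by blast
  then show "S = \<Union>F \<and> F \<subseteq> E \<and> card F = b - 1 \<and> card (\<Union>F) = b \<and> connected_on (\<Union>F) F"
    using tree_card_edges[OF fin E2 tr] FE cS conn by simp
next
  assume "S = \<Union>F \<and> F \<subseteq> E \<and> card F = b - 1 \<and> card (\<Union>F) = b \<and> connected_on (\<Union>F) F"
  then have SF: "S = \<Union>F" and FE: "F \<subseteq> E" and cF: "card F = b - 1" and cS: "card S = b"
    and conn: "connected_on S F" by auto
  have fin: "finite S" using cS b2 card.infinite by fastforce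
  have E2: "\<forall>e\<in>F. card e = 2 \<and> e \<subseteq> S" using FE SF EV by blast
  have "S \<noteq> {}" using cS b2 by auto
  moreover have "\<not> has_cycle S F"
    using acyclic_iff_card_edges[OF fin E2 conn \<open>S \<noteq> {}\<close>] cF cS b2 by simp
  ultimately have "is_tree S F" using conn unfolding is_tree_def by simp
  moreover have "S \<subseteq> V" using SF FE EV by blast
  ultimately show "(S, F) \<in> span_trees V E b"
    unfolding span_trees_def using FE E2 cS by simp
qed

lemma card_span_trees:
  assumes "2 \<le> b" and "\<forall>e\<in>E. card e = 2 \<and> e \<subseteq> V"
  shows "card (span_trees V E b) =
    card {F. F \<subseteq> E \<and> card F = b - 1 \<and> card (\<Union>F) = b \<and> connected_on (\<Union>F) F}"
proof -
  have "span_trees V E b =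
      (\<lambda>F. (\<Union>F, F)) ` {F. F \<subseteq> E \<and> card F = b - 1 \<and> card (\<Union>F) = b \<and> connected_on (\<Union>F) F}"
  proof (rule set_eqI)
    fix p :: "'a set \<times> 'a set set"
    show "p \<in> span_trees V E b \<longleftrightarrow>
        p \<in> (\<lambda>F. (\<Union>F, F)) ` {F. F \<subseteq> E \<and> card F = b - 1 \<and> card (\<Union>F) = b \<and> connected_on (\<Union>F) F}"
      using span_trees_iff[OF assms, of "fst p" "snd p"] by (cases p) auto
  qed
  then show ?thesis by (simp add: card_image inj_on_def)
qed

lemma finite_span_trees: "finite V \<Longrightarrow> finite E \<Longrightarrow> finite (span_trees V E b)"
  by (rule finite_subset[of _ "Pow V \<times> Pow E"]) (auto simp: span_trees_def)

section \<open>Counting spanning trees by enumeration\<close>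

fun subseqs_len :: "nat \<Rightarrow> 'a list \<Rightarrow> 'a list list" where
  "subseqs_len 0 xs = [[]]"
| "subseqs_len (Suc k) [] = []"
| "subseqs_len (Suc k) (x # xs) = map ((#) x) (subseqs_len k xs) @ subseqs_len (Suc k) xs"

lemma subseqs_len_eq_filter: "subseqs_len k xs = filter (\<lambda>ys. length ys = k) (subseqs xs)"
proof (induction k xs rule: subseqs_len.induct)
  case (1 xs)
  show ?case by (induction xs) (simp_all add: Let_def filter_map o_def)
qed (simp_all add: Let_def filter_map o_def)

lemma card_subsets_image_eq_length_filter:
  assumes dist: "distinct xs" and inj: "inj_on f (set xs)"
  shows "card {F. F \<subseteq> f ` set xs \<and> card F = k \<and> P F} =
    length (filter (\<lambda>ys. P (f ` set ys)) (subseqs_len k xs))"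
proof -
  define L where "L = filter (\<lambda>ys. P (f ` set ys)) (subseqs_len k xs)"
  have L_sub: "set ys \<subseteq> set xs" "distinct ys" "length ys = k" if "ys \<in> set L" for ys
    using that subseqs_powset[of xs] subseqs_distinctD[OF _ dist]
    by (auto simp: L_def subseqs_len_eq_filter)
  have card_image: "card (f ` set ys) = length ys" if "set ys \<subseteq> set xs" "distinct ys" for ys
    using that card_image[OF inj_on_subset[OF inj]] by (simp add: distinct_card)
  have "{F. F \<subseteq> f ` set xs \<and> card F = k \<and> P F} = set (map (\<lambda>ys. f ` set ys) L)"
  proof (rule set_eqI, rule iffI)
    fix F assume F: "F \<in> {F. F \<subseteq> f ` set xs \<and> card F = k \<and> P F}"
    then obtain A where A: "A \<subseteq> set xs" "F = f ` A" by (auto simp: subset_image_iff)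
    then obtain ys where ys: "ys \<in> set (subseqs xs)" "A = set ys"
      using subseqs_powset[of xs] by (metis Pow_iff imageE)
    then have "distinct ys" using subseqs_distinctD[OF _ dist] by blast
    then have "ys \<in> set L"
      using F A ys card_image[of ys] by (auto simp: L_def subseqs_len_eq_filter)
    then show "F \<in> set (map (\<lambda>ys. f ` set ys) L)" using A ys by auto
  next
    fix F assume "F \<in> set (map (\<lambda>ys. f ` set ys) L)"
    then obtain ys where "ys \<in> set L" "F = f ` set ys" by auto
    then show "F \<in> {F. F \<subseteq> f ` set xs \<and> card F = k \<and> P F}"
      using L_sub card_image by (auto simp: L_def)
  qed
  moreover have "distinct (map (\<lambda>ys. f ` set ys) L)"
  proof -
    have "distinct (map set L)"
      using distinct_set_subseqs[OF dist]
      by (simp add: L_def subseqs_len_eq_filter distinct_map_filter)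
    moreover have "set (map set L) \<subseteq> Pow (set xs)" using L_sub by auto
    then have "inj_on (image f) (set (map set L))"
      by (rule inj_on_subset[OF inj_on_image_Pow[OF inj]])
    ultimately show ?thesis
      using comp_inj_on[of set "set L" "image f"] by (simp add: distinct_map o_def)
  qed
  ultimately have "card {F. F \<subseteq> f ` set xs \<and> card F = k \<and> P F} = length (map (\<lambda>ys. f ` set ys) L)"
    by (metis distinct_card)
  then show ?thesis by (simp add: L_def)
qed

definition reach :: "'a set set \<Rightarrow> 'a set \<Rightarrow> 'a set" where
  "reach F R = R \<union> {v. \<exists>u\<in>R. {u, v} \<in> F}"

lemma reach_funpow_reachable: "v \<in> (reach F ^^ k) {x} \<Longrightarrow> (adj F)\<^sup>*\<^sup>* x v"
  by (induction k arbitrary: v) (auto simp: reach_def intro: rtranclp.rtrancl_into_rtrancl)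

lemma reachable_in_reach_closed:
  "(adj F)\<^sup>*\<^sup>* x v \<Longrightarrow> reach F R = R \<Longrightarrow> x \<in> R \<Longrightarrow> v \<in> R"
  by (induction rule: rtranclp.induct) (auto simp: reach_def set_eq_iff)

text \<open>The iterates of \<open>reach F\<close> grow strictly until they become stationary, so within
  the finite vertex set they are stationary after \<open>card S\<close> steps.\<close>
lemma reach_funpow_card_stationary:
  assumes fin: "finite S" and E: "\<forall>e\<in>F. e \<subseteq> S" and R: "R \<subseteq> S" "R \<noteq> {}"
  shows "reach F ((reach F ^^ card S) R) = (reach F ^^ card S) R"
proof -
  let ?f = "\<lambda>k. (reach F ^^ k) R"
  have sub: "?f k \<subseteq> S" for k
    using E R(1) by (induction k) (auto simp: reach_def)
  have stay: "?f (j + m) = ?f j" if "?f (Suc j) = ?f j" for j m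
    using that by (induction m) simp_all
  have grow: "k + card R \<le> card (?f k)" if "\<forall>j<k. ?f (Suc j) \<noteq> ?f j" for k
    using that
  proof (induction k)
    case (Suc k)
    have "?f k \<subseteq> ?f (Suc k)" by (auto simp: reach_def)
    moreover have "?f (Suc k) \<noteq> ?f k" using Suc.prems by blast
    ultimately have "?f k \<subset> ?f (Suc k)" by blast
    then have "card (?f k) < card (?f (Suc k))"
      using sub fin by (meson finite_subset psubset_card_mono)
    then show ?case using Suc by simp
  qed simp
  have "card (?f (card S)) \<le> card S" using sub fin by (simp add: card_mono)
  moreover have "card R > 0" using R fin by (meson card_gt_0_iff finite_subset)
  ultimately obtain j where j: "j < card S" "?f (Suc j) = ?f j" using grow[of "card S"] by force
  show ?thesis
    using stay[OF j(2), of "card S - j"] stay[OF j(2), of "Suc (card S) - j"] j(1) by simp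
qed

lemma connected_on_iff_reach:
  assumes fin: "finite S" and E: "\<forall>e\<in>F. e \<subseteq> S" and x: "x \<in> S"
  shows "connected_on S F \<longleftrightarrow> S \<subseteq> (reach F ^^ card S) {x}"
proof
  assume "connected_on S F"
  moreover have "x \<in> (reach F ^^ k) {x}" for k
    by (induction k) (auto simp: reach_def)
  ultimately show "S \<subseteq> (reach F ^^ card S) {x}"
    using reachable_in_reach_closed[OF _ reach_funpow_card_stationary[OF fin E]] x
    unfolding connected_on_def by blast
next
  assume S: "S \<subseteq> (reach F ^^ card S) {x}"
  show "connected_on S F" unfolding connected_on_def
  proof (intro ballI)
    fix y z assume "y \<in> S" "z \<in> S"
    then have xy: "(adj F)\<^sup>*\<^sup>* x y" and xz: "(adj F)\<^sup>*\<^sup>* x z"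
      using S by (auto intro: reach_funpow_reachable[where k = "card S"])
    show "(adj F)\<^sup>*\<^sup>* y z" by (rule rtranclp_trans[OF adj_rtranclp_sym[OF xy] xz])
  qed
qed

definition edge_of :: "'a \<times> 'a \<Rightarrow> 'a set" where
  "edge_of p = {fst p, snd p}"

lemma inj_on_edge_of_ordered:
  fixes es :: "('a::linorder \<times> 'a) list"
  assumes "\<forall>p\<in>set es. fst p < snd p"
  shows "inj_on edge_of (set es)"
proof (rule inj_onI)
  fix p q assume "p \<in> set es" "q \<in> set es" "edge_of p = edge_of q"
  moreover have "fst p < snd p" "fst q < snd q" using assms \<open>p \<in> set es\<close> \<open>q \<in> set es\<close> by auto
  ultimately show "p = q" by (auto simp: edge_of_def doubleton_eq_iff prod_eq_iff)
qed

definition vertex_list :: "('a \<times> 'a) list \<Rightarrow> 'a list" where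
  "vertex_list ys = concat (map (\<lambda>p. [fst p, snd p]) ys)"

definition reach_step :: "('a \<times> 'a) list \<Rightarrow> 'a list \<Rightarrow> 'a list" where
  "reach_step ys R = remdups (R @ map snd (filter (\<lambda>p. fst p \<in> set R) ys)
                              @ map fst (filter (\<lambda>p. snd p \<in> set R) ys))"

fun reach_iter :: "('a \<times> 'a) list \<Rightarrow> nat \<Rightarrow> 'a list \<Rightarrow> 'a list" where
  "reach_iter ys 0 R = R"
| "reach_iter ys (Suc k) R = reach_iter ys k (reach_step ys R)"

definition tree_edge_list :: "nat \<Rightarrow> ('a \<times> 'a) list \<Rightarrow> bool" where
  "tree_edge_list b ys \<longleftrightarrow> (let V = remdups (vertex_list ys) in
     length V = b \<and> (V = [] \<or> list_all (\<lambda>v. v \<in> set (reach_iter ys (length V) [hd V])) V))"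

lemma set_vertex_list: "set (vertex_list ys) = \<Union>(edge_of ` set ys)"
  by (auto simp: vertex_list_def edge_of_def)

lemma set_reach_step: "set (reach_step ys R) = reach (edge_of ` set ys) (set R)"
  by (auto simp: reach_step_def reach_def edge_of_def doubleton_eq_iff image_iff)

lemma set_reach_iter: "set (reach_iter ys k R) = (reach (edge_of ` set ys) ^^ k) (set R)"
  by (induction k arbitrary: R) (simp_all add: set_reach_step funpow_swap1)

lemma tree_edge_list_iff:
  "tree_edge_list b ys \<longleftrightarrow>
    card (\<Union>(edge_of ` set ys)) = b \<and> connected_on (\<Union>(edge_of ` set ys)) (edge_of ` set ys)"
proof -
  let ?S = "\<Union>(edge_of ` set ys)"
  define V where "V = remdups (vertex_list ys)"
  have V: "set V = ?S" "length V = card ?S"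
    by (simp_all add: V_def set_vertex_list length_remdups_card_conv)
  have fin: "finite ?S" by (simp add: edge_of_def)
  show ?thesis
  proof (cases "V = []")
    case True
    then show ?thesis using V by (simp add: tree_edge_list_def connected_on_def flip: V_def)
  next
    case False
    then have "hd V \<in> ?S" using V(1) hd_in_set by blast
    moreover have "\<forall>e\<in>edge_of ` set ys. e \<subseteq> ?S" by blast
    ultimately have "connected_on ?S (edge_of ` set ys) \<longleftrightarrow>
        set V \<subseteq> set (reach_iter ys (length V) [hd V])"
      using connected_on_iff_reach[OF fin] by (simp add: V set_reach_iter)
    then show ?thesis
      using False V by (auto simp: tree_edge_list_def list_all_iff simp flip: V_def)
  qed
qed

lemma card_span_trees_edge_list:
  assumes b2: "2 \<le> b" and dist: "distinct es" and inj: "inj_on edge_of (set es)"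
    and EV: "\<forall>e\<in>edge_of ` set es. card e = 2 \<and> e \<subseteq> V"
  shows "card (span_trees V (edge_of ` set es) b) =
    length (filter (tree_edge_list b) (subseqs_len (b - 1) es))"
proof -
  have "card (span_trees V (edge_of ` set es) b) = card {F. F \<subseteq> edge_of ` set es \<and>
      card F = b - 1 \<and> card (\<Union>F) = b \<and> connected_on (\<Union>F) F}"
    by (rule card_span_trees[OF b2 EV])
  also have "\<dots> = length (filter (\<lambda>ys. card (\<Union>(edge_of ` set ys)) = b \<and>
      connected_on (\<Union>(edge_of ` set ys)) (edge_of ` set ys)) (subseqs_len (b - 1) es))"
    by (rule card_subsets_image_eq_length_filter[OF dist inj])
  also have "(\<lambda>ys. card (\<Union>(edge_of ` set ys)) = b \<and>
      connected_on (\<Union>(edge_of ` set ys)) (edge_of ` set ys)) = tree_edge_list b"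
    by (rule ext) (rule tree_edge_list_iff[symmetric])
  finally show ?thesis .
qed

section \<open>The graph \<open>H\<^sub>n\<close>\<close>

definition H_edge_list :: "nat \<Rightarrow> (nat \<times> nat) list" where
  "H_edge_list n = [(i, j). i \<leftarrow> [1..<6], j \<leftarrow> [Suc i..<6]] @ map (\<lambda>i. (i, Suc i)) [5..<n]"

lemma mem_H_edge_list:
  "(a, b) \<in> set (H_edge_list n) \<longleftrightarrow> (1 \<le> a \<and> a < b \<and> b \<le> 5) \<or> (5 \<le> a \<and> b = Suc a \<and> b \<le> n)"
  by (auto simp: H_edge_list_def image_iff)

lemma H_E_cases:
  assumes "e \<in> H_E n"
  obtains i j where "e = {i, j}" "i \<in> {1..5}" "j \<in> {1..5}" "i \<noteq> j"
  | i where "e = {i, Suc i}" "5 \<le> i" "Suc i \<le> n"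
  using assms unfolding H_E_def by auto

lemma H_E_eq_edge_list: "H_E n = edge_of ` set (H_edge_list n)"
proof (rule set_eqI, rule iffI)
  fix e assume "e \<in> H_E n"
  then show "e \<in> edge_of ` set (H_edge_list n)"
  proof (cases rule: H_E_cases)
    case (1 i j)
    then have "(min i j, max i j) \<in> set (H_edge_list n)" "e = edge_of (min i j, max i j)"
      by (auto simp: mem_H_edge_list edge_of_def min_def max_def insert_commute)
    then show ?thesis by blast
  next
    case (2 i)
    then have "(i, Suc i) \<in> set (H_edge_list n)" by (simp add: mem_H_edge_list)
    then show ?thesis using 2 by (force simp: edge_of_def)
  qed
next
  fix e assume "e \<in> edge_of ` set (H_edge_list n)"
  then obtain a b where ab: "(a, b) \<in> set (H_edge_list n)" and e: "e = {a, b}"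
    by (auto simp: edge_of_def)
  from ab consider "1 \<le> a" "a < b" "b \<le> 5" | "5 \<le> a" "b = Suc a" "b \<le> n"
    unfolding mem_H_edge_list by blast
  then show "e \<in> H_E n"
  proof cases
    case 1
    then show ?thesis unfolding e H_E_def by (intro UnI1 CollectI exI[of _ a] exI[of _ b]) auto
  next
    case 2
    then show ?thesis unfolding e H_E_def by (intro UnI2 CollectI exI[of _ a]) auto
  qed
qed

lemma H_E_edges: "5 \<le> n \<Longrightarrow> \<forall>e\<in>H_E n. card e = 2 \<and> e \<subseteq> H_V n"
  by (auto simp: H_V_def elim!: H_E_cases)

lemma card_span_trees_H_edge_list:
  assumes "5 \<le> n" "2 \<le> b"
  shows "card (span_trees (H_V n) (H_E n) b) =
    length (filter (tree_edge_list b) (subseqs_len (b - 1) (H_edge_list n)))"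
proof -
  have "distinct [(i, j). i \<leftarrow> [1..<6::nat], j \<leftarrow> [Suc i..<6]]" by code_simp
  then have "distinct (H_edge_list n)" by (auto simp: H_edge_list_def distinct_map inj_on_def)
  moreover have "\<forall>p\<in>set (H_edge_list n). fst p < snd p" by (auto simp: mem_H_edge_list)
  ultimately show ?thesis
    using card_span_trees_edge_list[OF assms(2) _ inj_on_edge_of_ordered] H_E_edges[OF assms(1)]
    by (simp add: H_E_eq_edge_list)
qed

text \<open>The largest vertex of a cycle would need two distinct neighbours, but along path
  edges its only smaller neighbour is its predecessor.\<close>
lemma path_edges_acyclic:
  assumes "\<forall>e\<in>F. \<exists>i::nat. e = {i, Suc i}"
  shows "\<not> has_cycle S F"
proof
  assume "has_cycle S F"
  then obtain vs where L: "length vs \<ge> 3" and d: "distinct vs"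
    and c: "\<forall>i. Suc i < length vs \<longrightarrow> {vs ! i, vs ! Suc i} \<in> F"
    and cl: "{last vs, hd vs} \<in> F" unfolding has_cycle_def by blast
  define t where "t = Max (set vs)"
  have "set vs \<noteq> {}" using L by auto
  then have "t \<in> set vs" unfolding t_def by (rule Max_in[OF finite_set])
  then obtain j where j: "j < length vs" "vs ! j = t" by (auto simp: in_set_conv_nth)
  obtain a b where ab: "a \<noteq> b" "a \<in> set vs" "b \<in> set vs" "{t, a} \<in> F" "{t, b} \<in> F"
    using cycle_vertex_two_neighbours[OF L d c cl j(1)] j(2) by metis
  have "Suc x = t" if x: "x \<in> set vs" and tx: "{t, x} \<in> F" for x
  proof -
    obtain i where "{t, x} = {i, Suc i}" using assms tx by blast
    moreover have "x \<le> t" using x by (simp add: t_def)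
    ultimately show "Suc x = t" by (auto simp: doubleton_eq_iff)
  qed
  then have "Suc a = t" "Suc b = t" using ab by blast+
  then show False using ab(1) by simp
qed

lemma connected_on_path: "connected_on {m..M} ((\<lambda>i. {i, Suc i}) ` {m..<M::nat})"
proof -
  let ?F = "(\<lambda>i. {i, Suc i}) ` {m..<M}"
  have walk: "(adj ?F)\<^sup>*\<^sup>* m (m + d)" if "m + d \<le> M" for d
    using that by (induction d) (auto intro: rtranclp.rtrancl_into_rtrancl)
  show ?thesis unfolding connected_on_def
  proof (intro ballI)
    fix x y assume "x \<in> {m..M}" "y \<in> {m..M}"
    then have mx: "(adj ?F)\<^sup>*\<^sup>* m x" and my: "(adj ?F)\<^sup>*\<^sup>* m y"
      using walk[of "x - m"] walk[of "y - m"] by auto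
    show "(adj ?F)\<^sup>*\<^sup>* x y" by (rule rtranclp_trans[OF adj_rtranclp_sym[OF mx] my])
  qed
qed

definition path_tree :: "nat \<Rightarrow> nat \<Rightarrow> nat set \<times> nat set set" where
  "path_tree m M = ({m..M}, (\<lambda>i. {i, Suc i}) ` {m..<M})"

lemma path_tree_in_span_trees_H:
  assumes "5 \<le> m" "m \<le> N"
  shows "path_tree m N \<in> span_trees (H_V N) (H_E N) (N + 1 - m)"
proof -
  have "(\<lambda>i. {i, Suc i}) ` {m..<N} \<subseteq> H_E N" using assms(1) by (auto simp: H_E_def)
  moreover have "\<not> has_cycle {m..N} ((\<lambda>i. {i, Suc i}) ` {m..<N})"
    by (rule path_edges_acyclic) auto
  then have "is_tree {m..N} ((\<lambda>i. {i, Suc i}) ` {m..<N})"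
    unfolding is_tree_def using connected_on_path assms(2) by auto
  ultimately show ?thesis using assms by (auto simp: path_tree_def span_trees_def H_V_def)
qed

lemma H_walk_down_uses_edge:
  assumes FE: "F \<subseteq> H_E N" and walk: "(adj F)\<^sup>*\<^sup>* u v" and k: "6 \<le> k" "k \<le> u" "v < k"
  shows "{k - 1, k} \<in> F"
proof -
  have "v < k \<longrightarrow> {k - 1, k} \<in> F" using walk
  proof (induction rule: rtranclp_induct)
    case (step w v)
    show ?case
    proof (intro impI)
      assume "v < k"
      have "{w, v} \<in> H_E N" using step.hyps(2) FE by blast
      then consider "w \<le> 5" | "w = Suc v" | "w < k"
        using \<open>v < k\<close> by (cases rule: H_E_cases) (auto simp: doubleton_eq_iff)
      then show "{k - 1, k} \<in> F"
      proof cases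
        case 2
        then show ?thesis using step k \<open>v < k\<close>
          by (metis Suc_lessI diff_Suc_1 insert_commute not_less)
      qed (use step k in auto)
    qed
  qed (use k in simp)
  then show ?thesis using k by blast
qed

lemma span_trees_H_Suc_avoiding_top:
  "(S, F) \<in> span_trees (H_V (Suc n)) (H_E (Suc n)) b \<and> Suc n \<notin> S \<longleftrightarrow>
    (S, F) \<in> span_trees (H_V n) (H_E n) b"
proof
  assume "(S, F) \<in> span_trees (H_V (Suc n)) (H_E (Suc n)) b \<and> Suc n \<notin> S"
  then have T: "(S, F) \<in> span_trees (H_V (Suc n)) (H_E (Suc n)) b" and top: "Suc n \<notin> S" by auto
  then have "S \<subseteq> H_V n" by (auto simp: span_trees_def H_V_def le_Suc_eq)
  moreover have "F \<subseteq> H_E n"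
  proof
    fix e assume e: "e \<in> F"
    then have "e \<in> H_E (Suc n)" "e \<subseteq> S" using T by (auto simp: span_trees_def)
    then show "e \<in> H_E n"
    proof (cases rule: H_E_cases)
      case (1 i j)
      then show ?thesis unfolding H_E_def by blast
    next
      case (2 i)
      then have "Suc i \<le> n" using \<open>e \<subseteq> S\<close> top by auto
      then show ?thesis using 2 unfolding H_E_def by blast
    qed
  qed
  ultimately show "(S, F) \<in> span_trees (H_V n) (H_E n) b" using T by (auto simp: span_trees_def)
next
  assume "(S, F) \<in> span_trees (H_V n) (H_E n) b"
  moreover have "H_V n \<subseteq> H_V (Suc n)" "H_E n \<subseteq> H_E (Suc n)" by (auto simp: H_V_def H_E_def)
  ultimately show "(S, F) \<in> span_trees (H_V (Suc n)) (H_E (Suc n)) b \<and> Suc n \<notin> S"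
    by (auto simp: span_trees_def H_V_def)
qed

lemma H_span_tree_top_vertices:
  assumes nb: "b + 3 \<le> n" and T: "(S, F) \<in> span_trees (H_V (Suc n)) (H_E (Suc n)) b"
    and top: "Suc n \<in> S"
  shows "S = {n + 2 - b..Suc n}"
proof -
  have SV: "S \<subseteq> {1..Suc n}" and FE: "F \<subseteq> H_E (Suc n)" and FS: "\<forall>e\<in>F. e \<subseteq> S"
    and cS: "card S = b" and conn: "connected_on S F"
    using T unfolding span_trees_def H_V_def is_tree_def by auto
  have fin: "finite S" using SV finite_subset by blast
  have low: "n + 2 - b \<le> x" if x: "x \<in> S" for x
  proof (rule ccontr)
    assume "\<not> n + 2 - b \<le> x"
    have walk: "(adj F)\<^sup>*\<^sup>* (Suc n) x" using conn top x unfolding connected_on_def by blast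
    \<comment> \<open>every path vertex above x is forced into S by the bridges it must cross\<close>
    have "j \<in> S" if "max x 5 \<le> j" "j \<le> n" for j
      using H_walk_down_uses_edge[OF FE walk, of "Suc j"] that FS by auto
    then have "insert x {max x 5..Suc n} \<subseteq> S" using x top by (auto simp: le_Suc_eq)
    then have "card (insert x {max x 5..Suc n}) \<le> b" using card_mono[OF fin] cS by metis
    moreover have "card (insert x {max x 5..Suc n}) > b"
    proof (cases "5 \<le> x")
      case True
      then have "insert x {max x 5..Suc n} = {x..Suc n}" using x SV by auto
      then show ?thesis using \<open>\<not> n + 2 - b \<le> x\<close> nb by simp
    next
      case False
      then show ?thesis using nb by simp
    qed
    ultimately show False by simp
  qed
  have "S \<subseteq> {n + 2 - b..Suc n}" using low SV by auto
  moreover have "card {n + 2 - b..Suc n} = b" using nb by simp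
  ultimately show ?thesis using card_subset_eq[OF finite_atLeastAtMost] cS by metis
qed

lemma H_span_tree_through_top:
  assumes nb: "b + 3 \<le> n" and b2: "2 \<le> b" and T: "(S, F) \<in> span_trees (H_V (Suc n)) (H_E (Suc n)) b"
    and top: "Suc n \<in> S"
  shows "(S, F) = path_tree (n + 2 - b) (Suc n)"
proof -
  define m where "m = n + 2 - b"
  define P where "P = (\<lambda>i. {i, Suc i}) ` {m..<Suc n}"
  have S: "S = {m..Suc n}" using H_span_tree_top_vertices[OF nb T top] by (simp add: m_def)
  have FE: "F \<subseteq> H_E (Suc n)" and FS: "\<forall>e\<in>F. e \<subseteq> S" and tr: "is_tree S F"
    using T unfolding span_trees_def by auto
  have "F \<subseteq> P"
  proof
    fix e assume e: "e \<in> F"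
    then have "e \<in> H_E (Suc n)" "e \<subseteq> {m..Suc n}" using FS FE S by auto
    then show "e \<in> P" using nb by (cases rule: H_E_cases) (auto simp: P_def m_def)
  qed
  moreover have "\<forall>e\<in>F. card e = 2 \<and> e \<subseteq> S" using H_E_edges[of "Suc n"] FE FS nb b2 by auto
  then have "card F + 1 = card S" using tree_card_edges[OF _ _ tr] S by simp
  moreover have "inj_on (\<lambda>i. {i, Suc i}) {m..<Suc n}" by (auto simp: inj_on_def doubleton_eq_iff)
  then have "card P = Suc n - m" by (simp add: P_def card_image)
  ultimately have "F = P" using card_subset_eq[of P F] S nb by (simp add: P_def m_def)
  then show ?thesis by (simp add: path_tree_def S P_def m_def)
qed

lemma span_trees_H_Suc:
  assumes "b + 3 \<le> n" "2 \<le> b"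
  shows "span_trees (H_V (Suc n)) (H_E (Suc n)) b =
    insert (path_tree (n + 2 - b) (Suc n)) (span_trees (H_V n) (H_E n) b)"
proof -
  have "path_tree (n + 2 - b) (Suc n) \<in> span_trees (H_V (Suc n)) (H_E (Suc n)) b"
    using path_tree_in_span_trees_H[of "n + 2 - b" "Suc n"] assms by simp
  moreover have "Suc n \<in> fst (path_tree (n + 2 - b) (Suc n))" using assms by (simp add: path_tree_def)
  ultimately show ?thesis
  proof (intro set_eqI)
    fix p :: "nat set \<times> nat set set"
    obtain S F where p: "p = (S, F)" by fastforce
    show "p \<in> span_trees (H_V (Suc n)) (H_E (Suc n)) b \<longleftrightarrow>
        p \<in> insert (path_tree (n + 2 - b) (Suc n)) (span_trees (H_V n) (H_E n) b)"
      using H_span_tree_through_top[OF assms, of S F] span_trees_H_Suc_avoiding_top[of S F n b]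
        \<open>path_tree (n + 2 - b) (Suc n) \<in> _\<close> \<open>Suc n \<in> fst _\<close> p by (cases "Suc n \<in> S") auto
  qed
qed

lemma card_span_trees_H_Suc:
  assumes "b + 3 \<le> n" "2 \<le> b"
  shows "card (span_trees (H_V (Suc n)) (H_E (Suc n)) b) = Suc (card (span_trees (H_V n) (H_E n) b))"
proof -
  have "path_tree (n + 2 - b) (Suc n) \<notin> span_trees (H_V n) (H_E n) b"
    using assms by (auto simp: path_tree_def span_trees_def H_V_def)
  moreover have "finite (span_trees (H_V n) (H_E n) b)"
    by (rule finite_span_trees) (simp_all add: H_V_def H_E_eq_edge_list)
  ultimately show ?thesis using span_trees_H_Suc[OF assms] by simp
qed

lemma card_span_trees_H:
  assumes "2 \<le> b" "b + 3 \<le> n"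
  shows "card (span_trees (H_V n) (H_E n) b) =
    card (span_trees (H_V (b + 3)) (H_E (b + 3)) b) + (n - (b + 3))"
  using assms(2)
proof (induction n rule: dec_induct)
  case (step n)
  then show ?case using card_span_trees_H_Suc[OF step.hyps(1) assms(1)] by simp
qed simp

lemma card_span_trees_H_base:
  "card (span_trees (H_V 6) (H_E 6) 3) = 34"
  "card (span_trees (H_V 7) (H_E 7) 4) = 102"
  "card (span_trees (H_V 8) (H_E 8) 5) = 211"
  by (simp_all only: card_span_trees_H_edge_list) code_simp+

lemma H_E_neighbour: "6 \<le> x \<Longrightarrow> {x, w} \<in> H_E n \<Longrightarrow> Suc w = x \<or> w = Suc x"
  by (erule H_E_cases) (auto simp: doubleton_eq_iff)

lemma cliques_H:
  assumes "5 \<le> n" "3 \<le> b"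
  shows "cliques (H_V n) (H_E n) b = {S. S \<subseteq> {1..5} \<and> card S = b}"
proof (intro set_eqI iffI)
  fix S assume "S \<in> cliques (H_V n) (H_E n) b"
  then have SV: "S \<subseteq> {1..n}" and cS: "card S = b"
    and cl: "\<forall>x\<in>S. \<forall>y\<in>S. x \<noteq> y \<longrightarrow> {x, y} \<in> H_E n"
    unfolding cliques_def H_V_def by auto
  have "x \<le> 5" if x: "x \<in> S" for x
  proof (rule ccontr)
    assume "\<not> x \<le> 5"
    have fin: "finite S" using SV finite_subset by blast
    then have "2 \<le> card (S - {x})" using cS assms(2) x by simp
    then have "S - {x} \<noteq> {}" by (metis card.empty not_numeral_le_zero)
    then obtain y where y: "y \<in> S - {x}" by blast
    then have "1 \<le> card (S - {x} - {y})" using \<open>2 \<le> card (S - {x})\<close> fin by simp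
    then have "S - {x} - {y} \<noteq> {}" by (metis card.empty not_one_le_zero)
    then obtain z where z: "z \<in> S - {x} - {y}" by blast
    have "{x, y} \<in> H_E n" "{x, z} \<in> H_E n" using cl x y z by auto
    then have "Suc y = x \<or> y = Suc x" "Suc z = x \<or> z = Suc x"
      using H_E_neighbour \<open>\<not> x \<le> 5\<close> by (simp_all add: not_le Suc_le_eq)
    moreover have "y \<noteq> z" using z by blast
    ultimately have "{y, z} = {x - 1, Suc x}" by auto
    moreover have "{y, z} \<in> H_E n" using cl y z by auto
    ultimately have "{x - 1, Suc x} \<in> H_E n" by simp
    then show False using \<open>\<not> x \<le> 5\<close> by (cases rule: H_E_cases) (auto simp: doubleton_eq_iff)
  qed
  then show "S \<in> {S. S \<subseteq> {1..5} \<and> card S = b}" using SV cS by auto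
next
  fix S assume S: "S \<in> {S. S \<subseteq> {1..5::nat} \<and> card S = b}"
  have "{x, y} \<in> H_E n" if "x \<in> S" "y \<in> S" "x \<noteq> y" for x y
    unfolding H_E_def using S that by (intro UnI1 CollectI exI[of _ x] exI[of _ y]) auto
  then show "S \<in> cliques (H_V n) (H_E n) b"
    using S assms(1) unfolding cliques_def H_V_def by auto
qed

lemma card_cliques_H: "5 \<le> n \<Longrightarrow> 3 \<le> b \<Longrightarrow> card (cliques (H_V n) (H_E n) b) = 5 choose b"
  by (simp add: cliques_H n_subsets)

lemma C_ratio_H:
  "6 \<le> n \<Longrightarrow> C_ratio (H_V n) (H_E n) 3 = 30 / (real n + 28)"
  "7 \<le> n \<Longrightarrow> C_ratio (H_V n) (H_E n) 4 = 80 / (real n + 95)"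
  "8 \<le> n \<Longrightarrow> C_ratio (H_V n) (H_E n) 5 = 125 / (real n + 203)"
proof -
  have choose: "(5::nat) choose 3 = 10" "(5::nat) choose 4 = 5" "(5::nat) choose 5 = 1"
    by code_simp+
  show "6 \<le> n \<Longrightarrow> C_ratio (H_V n) (H_E n) 3 = 30 / (real n + 28)"
    using card_span_trees_H[of 3 n] card_span_trees_H_base card_cliques_H[of n 3] choose
    by (simp add: C_ratio_def)
  show "7 \<le> n \<Longrightarrow> C_ratio (H_V n) (H_E n) 4 = 80 / (real n + 95)"
    using card_span_trees_H[of 4 n] card_span_trees_H_base card_cliques_H[of n 4] choose
    by (simp add: C_ratio_def)
  show "8 \<le> n \<Longrightarrow> C_ratio (H_V n) (H_E n) 5 = 125 / (real n + 203)"
    using card_span_trees_H[of 5 n] card_span_trees_H_base card_cliques_H[of n 5] choose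
    by (simp add: C_ratio_def)
qed

theorem mainTheorem11:
  shows "(\<forall>n::nat. n \<ge> 6 \<longrightarrow> C_ratio (H_V n) (H_E n) 3 = 30 / (real n + 28))
    \<and> (\<forall>n::nat. n \<ge> 7 \<longrightarrow> C_ratio (H_V n) (H_E n) 4 = 80 / (real n + 95))
    \<and> (\<forall>n::nat. n \<ge> 8 \<longrightarrow> C_ratio (H_V n) (H_E n) 5 = 125 / (real n + 203))
    \<and> (\<forall>n::nat. n \<ge> 8 \<longrightarrow>
         (C_ratio (H_V n) (H_E n) 4 \<ge> C_ratio (H_V n) (H_E n) 5 \<longleftrightarrow> n \<le> 97)
       \<and> (C_ratio (H_V n) (H_E n) 4 = C_ratio (H_V n) (H_E n) 5 \<longleftrightarrow> n = 97))
    \<and> C_ratio (H_V 97) (H_E 97) 4 = 5 / 12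
    \<and> C_ratio (H_V 97) (H_E 97) 5 = 5 / 12
    \<and> (\<forall>n::nat. n \<ge> 7 \<longrightarrow>
         (C_ratio (H_V n) (H_E n) 3 \<ge> C_ratio (H_V n) (H_E n) 4 \<longleftrightarrow> n \<le> 12))"
  by (intro conjI allI impI) (simp_all add: C_ratio_H field_simps, linarith)

end
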